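(* Let $G$ be a sufficiently large abelian group of order $n$ with $G\not\cong\mathbb{Z}_2^m$ and $G\not\cong\mathbb{Z}_2^m\times\mathbb{Z}_4$ (for any $m$). Then there are $n/100$ pairwise disjoint triples $\{x,y,z\}$ of distinct non-involutions of $G$ with $x+y+z=0$.
   Context: A non-involution is an element $x\in G$ with $x\neq -x$ (i.e. $2x\neq 0$). "Sufficiently large" means there is $n_0$ such that the statement holds for all such groups of order at least $n_0$. *)

theory Defs
  imports "HOL-Algebra.Algebra"
begin

definition Z2pow :: "nat \<Rightarrow> (nat \<Rightarrow> int) monoid" where
  "Z2pow m = product_group {..<m} (\<lambda>_. integer_mod_group 2)"

definition Z2pow_Z4 :: "nat \<Rightarrow> ((nat \<Rightarrow> int) \<times> int) monoid" where
  "Z2pow_Z4 m = Z2pow m \<times>\<times> integer_mod_group 4"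

(* non-involution (in multiplicative notation of HOL-Algebra): x \<noteq> x^{-1}, i.e. x x \<noteq> 1 *)
definition non_involution :: "('a, 'b) monoid_scheme \<Rightarrow> 'a \<Rightarrow> bool" where
  "non_involution G x \<longleftrightarrow> x \<in> carrier G \<and> x \<otimes>\<^bsub>G\<^esub> x \<noteq> \<one>\<^bsub>G\<^esub>"

end

(*
  Let H be the subgroup of elements with x^2 = 1 and q its index. If q = 1, G is an
  F_2-vector space, so a basis gives G = Z_2^m. If q = 2, pick x outside H: then x^2 is an
  involution, and a basis of H modulo {1, x^2} together with x gives G = Z_2^m x Z_4.
  Otherwise |H| <= n/3, so at least (n - |H|)(n - 2|H|) >= 2n^2/9 ordered pairs (x, y) have
  x, y and xy all non-involutions, and each yields the triple {x, y, (xy)^-1} of sum zero.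
  Take a maximal family of disjoint such triples, covering a set U. If it had fewer than n/100
  members, then |U| < 3n/100, and the pairs whose triple is degenerate or meets U number at
  most 3n + 3|U|n < 2n^2/9; so some triple avoids U, contradicting maximality.
*)

theory Submission
  imports Defs
begin

lemma (in group) int_pow_mod:
  assumes "x \<in> carrier G" "x [^] (n::int) = \<one>"
  shows "x [^] (a mod n) = x [^] a"
proof -
  have "int (ord x) dvd n" using assms int_pow_eq_id by blast
  then have "int (ord x) dvd a - a mod n" by (simp add: minus_mod_eq_mult_div dvd_mult2)
  then show ?thesis using assms(1) int_pow_eq by blast
qed

lemma (in group) int_pow_two: "x \<in> carrier G \<Longrightarrow> x [^] (2::int) = x \<otimes> x"
  by (metis int_pow_1 int_pow_mult one_add_one)

lemma (in group) iso_of_surj_hom_card_eq: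
  assumes "group A" and f: "f \<in> hom A G" and surj: "carrier G \<subseteq> f ` carrier A"
    and fin: "finite (carrier G)" and card: "card (carrier A) = order G"
  shows "G \<cong> A"
proof -
  have img: "f ` carrier A = carrier G" using f surj by (auto simp: hom_def)
  have "finite (carrier A)"
    using card fin by (metis card_ge_0_finite order_gt_0_iff_finite)
  then have "inj_on f (carrier A)"
    using img card by (intro eq_card_imp_inj_on) (simp_all add: order_def)
  then have "A \<cong> G" using f img by (intro is_isoI) (simp add: iso_iff)
  then show ?thesis using group.iso_sym[OF \<open>group A\<close>] by blast
qed

section \<open>The groups Z_2^m and Z_2^m x Z_4\<close>

lemma carrier_Z2pow: "carrier (Z2pow m) = {..<m} \<rightarrow>\<^sub>E {0, 1}"
proof -
  have "{0..<2::int} = {0, 1}" by auto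
  then show ?thesis by (simp add: Z2pow_def carrier_integer_mod_group)
qed

lemma mult_Z2pow: "x \<otimes>\<^bsub>Z2pow m\<^esub> y = (\<lambda>i\<in>{..<m}. (x i + y i) mod 2)"
  by (simp add: Z2pow_def)

lemma group_Z2pow: "group (Z2pow m)"
  by (simp add: Z2pow_def)

lemma card_Z2pow: "card (carrier (Z2pow m)) = 2 ^ m"
  by (simp add: carrier_Z2pow card_PiE numeral_2_eq_2)

lemma group_Z2pow_Z4: "group (Z2pow_Z4 m)"
  by (simp add: Z2pow_Z4_def DirProd_group group_Z2pow)

lemma carrier_Z2pow_Z4: "carrier (Z2pow_Z4 m) = carrier (Z2pow m) \<times> {0..<4}"
  by (simp add: Z2pow_Z4_def carrier_integer_mod_group)

lemma mult_Z2pow_Z4: "(v, a) \<otimes>\<^bsub>Z2pow_Z4 m\<^esub> (w, b) = (v \<otimes>\<^bsub>Z2pow m\<^esub> w, (a + b) mod 4)"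
  by (simp add: Z2pow_Z4_def DirProd_def)

lemma card_Z2pow_Z4: "card (carrier (Z2pow_Z4 m)) = 2 ^ m * 4"
  by (simp add: carrier_Z2pow_Z4 card_Z2pow card_cartesian_product)

section \<open>Bases of the subgroup of involutions\<close>

text \<open>The set \<^term>\<open>involutions G\<close> contains \<^term>\<open>\<one>\<^bsub>G\<^esub>\<close>, so that its complement in the
  carrier consists exactly of the non-involutions.\<close>

definition involutions :: "('a, 'b) monoid_scheme \<Rightarrow> 'a set" where
  "involutions G = {x \<in> carrier G. x \<otimes>\<^bsub>G\<^esub> x = \<one>\<^bsub>G\<^esub>}"

definition pow_prod :: "('a, 'b) monoid_scheme \<Rightarrow> nat \<Rightarrow> (nat \<Rightarrow> 'a) \<Rightarrow> (nat \<Rightarrow> int) \<Rightarrow> 'a" where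
  "pow_prod G m g v = finprod G (\<lambda>i. g i [^]\<^bsub>G\<^esub> v i) {..<m}"

context comm_group
begin

lemma subgroup_involutions: "subgroup (involutions G) G"
proof (rule subgroupI)
  fix x y assume "x \<in> involutions G" "y \<in> involutions G"
  then show "x \<otimes> y \<in> involutions G"
    by (auto simp: involutions_def m_ac)
next
  fix x assume "x \<in> involutions G"
  then show "inv x \<in> involutions G"
    by (auto simp: involutions_def simp flip: inv_mult)
qed (auto simp: involutions_def)

lemma pow_prod_closed: "g \<in> {..<m} \<rightarrow> carrier G \<Longrightarrow> pow_prod G m g v \<in> carrier G"
  unfolding pow_prod_def by (intro finprod_closed) auto

lemma pow_prod_Suc:
  assumes "g \<in> {..<Suc m} \<rightarrow> carrier G"
  shows "pow_prod G (Suc m) g v = pow_prod G m g v \<otimes> g m [^] v m"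
  using assms unfolding pow_prod_def lessThan_Suc
  by (subst finprod_insert) (auto intro!: m_comm finprod_closed)

lemma pow_prod_cong:
  assumes "g' \<in> {..<m} \<rightarrow> carrier G" "\<And>i. i < m \<Longrightarrow> g i = g' i" "\<And>i. i < m \<Longrightarrow> v i = v' i"
  shows "pow_prod G m g v = pow_prod G m g' v'"
  using assms unfolding pow_prod_def by (intro finprod_cong') auto

lemma pow_prod_in_subgroup:
  assumes "subgroup H G" "g \<in> {..<m} \<rightarrow> H"
  shows "pow_prod G m g v \<in> H"
  using assms(2)
proof (induction m)
  case 0
  then show ?case using assms(1) by (simp add: pow_prod_def subgroup.one_closed)
next
  case (Suc m)
  then have "g \<in> {..<m} \<rightarrow> H" "g m \<in> H" by auto
  then have "pow_prod G m g v \<in> H" "g m [^] v m \<in> H"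
    using Suc.IH subgroup_int_pow_closed[OF assms(1)] by auto
  moreover have "g \<in> {..<Suc m} \<rightarrow> carrier G" using Suc.prems subgroup.subset[OF assms(1)] by blast
  ultimately show ?case using assms(1) by (simp add: pow_prod_Suc subgroup.m_closed)
qed

lemma pow_prod_mult_mod2:
  assumes "g \<in> {..<m} \<rightarrow> involutions G"
  shows "pow_prod G m g (\<lambda>i. (v i + w i) mod 2) = pow_prod G m g v \<otimes> pow_prod G m g w"
proof -
  have "g i [^] ((v i + w i) mod 2) = g i [^] v i \<otimes> g i [^] w i" if "i < m" for i
  proof -
    have "g i \<in> carrier G" "g i \<otimes> g i = \<one>"
      using assms that by (auto simp: involutions_def)
    then have "g i \<in> carrier G" "g i [^] (2::int) = \<one>" by (simp_all add: int_pow_two)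
    then show ?thesis by (simp add: int_pow_mod int_pow_mult)
  qed
  then show ?thesis
    using assms unfolding pow_prod_def involutions_def
    by (subst finprod_multf[symmetric]) (auto intro!: finprod_cong')
qed

lemma pow_prod_hom:
  assumes "g \<in> {..<m} \<rightarrow> involutions G"
  shows "pow_prod G m g \<in> hom (Z2pow m) G"
proof -
  have g: "g \<in> {..<m} \<rightarrow> carrier G" using assms by (auto simp: involutions_def)
  show ?thesis
  proof (rule homI)
    fix v w
    have "pow_prod G m g (v \<otimes>\<^bsub>Z2pow m\<^esub> w) = pow_prod G m g (\<lambda>i. (v i + w i) mod 2)"
      using g by (intro pow_prod_cong) (auto simp: mult_Z2pow)
    then show "pow_prod G m g (v \<otimes>\<^bsub>Z2pow m\<^esub> w) = pow_prod G m g v \<otimes> pow_prod G m g w"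
      using assms by (simp add: pow_prod_mult_mod2)
  qed (use g pow_prod_closed in blast)
qed

lemma pow_prod_pow_hom:
  assumes "g \<in> {..<m} \<rightarrow> involutions G" "x \<in> carrier G" "x [^] (4::int) = \<one>"
  shows "(\<lambda>(v, a). pow_prod G m g v \<otimes> x [^] a) \<in> hom (Z2pow_Z4 m) G"
proof -
  have g: "g \<in> {..<m} \<rightarrow> carrier G" using assms(1) by (auto simp: involutions_def)
  show ?thesis
  proof (rule homI)
    fix p :: "(nat \<Rightarrow> int) \<times> int"
    show "(\<lambda>(v, a). pow_prod G m g v \<otimes> x [^] a) p \<in> carrier G"
      using g assms(2) by (auto split: prod.split intro!: m_closed pow_prod_closed)
  next
    fix p q assume "p \<in> carrier (Z2pow_Z4 m)" "q \<in> carrier (Z2pow_Z4 m)"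
    then obtain v a w b where p: "p = (v, a)" "v \<in> carrier (Z2pow m)"
      and q: "q = (w, b)" "w \<in> carrier (Z2pow m)"
      by (auto simp: carrier_Z2pow_Z4)
    have "pow_prod G m g (v \<otimes>\<^bsub>Z2pow m\<^esub> w) = pow_prod G m g v \<otimes> pow_prod G m g w"
      using pow_prod_hom[OF assms(1)] p q by (simp add: hom_mult)
    moreover have "x [^] ((a + b) mod 4) = x [^] a \<otimes> x [^] b"
      using assms(2,3) by (simp add: int_pow_mod int_pow_mult)
    ultimately show "(\<lambda>(v, a). pow_prod G m g v \<otimes> x [^] a) (p \<otimes>\<^bsub>Z2pow_Z4 m\<^esub> q)
        = (\<lambda>(v, a). pow_prod G m g v \<otimes> x [^] a) p \<otimes> (\<lambda>(v, a). pow_prod G m g v \<otimes> x [^] a) q"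
      using p q g assms(2) pow_prod_closed by (simp add: mult_Z2pow_Z4 m_ac)
  qed
qed

end

text \<open>Viewing the involutions as a vector space over Z_2, \<^term>\<open>span_mod G m g K\<close> is the span of
  \<open>g 0, ..., g (m - 1)\<close> plus \<^term>\<open>K\<close>, and \<^term>\<open>independent_mod G m g K\<close> says that these
  vectors are linearly independent modulo \<^term>\<open>K\<close>.\<close>

definition span_mod :: "('a, 'b) monoid_scheme \<Rightarrow> nat \<Rightarrow> (nat \<Rightarrow> 'a) \<Rightarrow> 'a set \<Rightarrow> 'a set" where
  "span_mod G m g K = (\<lambda>(v, k). pow_prod G m g v \<otimes>\<^bsub>G\<^esub> k) ` (({..<m} \<rightarrow>\<^sub>E {0, 1}) \<times> K)"

lemma span_modI:
  "v \<in> {..<m} \<rightarrow>\<^sub>E {0, 1} \<Longrightarrow> k \<in> K \<Longrightarrow> pow_prod G m g v \<otimes>\<^bsub>G\<^esub> k \<in> span_mod G m g K"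
  unfolding span_mod_def by (rule rev_image_eqI[of "(v, k)"]) simp_all

lemma span_modE:
  assumes "y \<in> span_mod G m g K"
  obtains v k where "v \<in> {..<m} \<rightarrow>\<^sub>E {0, 1}" "k \<in> K" "y = pow_prod G m g v \<otimes>\<^bsub>G\<^esub> k"
proof -
  obtain p where p: "p \<in> ({..<m} \<rightarrow>\<^sub>E {0, 1}) \<times> K" "y = (\<lambda>(v, k). pow_prod G m g v \<otimes>\<^bsub>G\<^esub> k) p"
    using assms unfolding span_mod_def by (rule imageE)
  then show thesis
    by (intro that[of "fst p" "snd p"]) (simp_all add: mem_Times_iff case_prod_beta)
qed

definition independent_mod :: "('a, 'b) monoid_scheme \<Rightarrow> nat \<Rightarrow> (nat \<Rightarrow> 'a) \<Rightarrow> 'a set \<Rightarrow> bool" where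
  "independent_mod G m g K \<longleftrightarrow>
     (\<forall>v \<in> {..<m} \<rightarrow>\<^sub>E {0, 1}. pow_prod G m g v \<in> K \<longrightarrow> (\<forall>i<m. v i = 0))"

context comm_group
begin

lemma independent_mod_unique:
  assumes ind: "independent_mod G m g K" and g: "g \<in> {..<m} \<rightarrow> involutions G" and K: "subgroup K G"
    and v: "v \<in> {..<m} \<rightarrow>\<^sub>E {0, 1}" and w: "w \<in> {..<m} \<rightarrow>\<^sub>E {0, 1}" and k: "k \<in> K" "k' \<in> K"
    and eq: "pow_prod G m g v \<otimes> k = pow_prod G m g w \<otimes> k'"
  shows "v = w"
proof -
  define u where "u = v \<otimes>\<^bsub>Z2pow m\<^esub> w"
  have vw: "v \<in> carrier (Z2pow m)" "w \<in> carrier (Z2pow m)" using v w by (simp_all add: carrier_Z2pow)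
  have kc: "k \<in> carrier G" "k' \<in> carrier G" using k subgroup.mem_carrier[OF K] by auto
  have w_inv: "pow_prod G m g w \<in> involutions G"
    using g by (rule pow_prod_in_subgroup[OF subgroup_involutions])
  then have wc: "pow_prod G m g w \<in> carrier G" by (simp add: involutions_def)
  have vc: "pow_prod G m g v \<in> carrier G"
    using g by (intro pow_prod_closed) (auto simp: involutions_def)
  have "pow_prod G m g u = pow_prod G m g v \<otimes> pow_prod G m g w"
    unfolding u_def using pow_prod_hom[OF g] vw by (rule hom_mult)
  also have "\<dots> = (pow_prod G m g v \<otimes> k) \<otimes> inv k \<otimes> pow_prod G m g w"
    using vc kc wc by (simp add: m_assoc)
  also have "\<dots> = (pow_prod G m g w \<otimes> pow_prod G m g w) \<otimes> (k' \<otimes> inv k)"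
    unfolding eq using kc wc by (simp add: m_ac)
  also have "\<dots> = k' \<otimes> inv k"
    using w_inv kc by (simp add: involutions_def)
  finally have "pow_prod G m g u \<in> K"
    using K k by (simp add: subgroup.m_closed subgroup.m_inv_closed)
  moreover have "u \<in> {..<m} \<rightarrow>\<^sub>E {0, 1}"
    unfolding u_def using vw monoid.m_closed[OF group.is_monoid[OF group_Z2pow]] by (simp add: carrier_Z2pow)
  ultimately have "\<forall>i<m. u i = 0" using ind by (auto simp: independent_mod_def)
  show "v = w"
  proof (rule PiE_ext[OF v w])
    fix i assume "i \<in> {..<m}"
    then have "(v i + w i) mod 2 = 0" "v i \<in> {0, 1}" "w i \<in> {0, 1}"
      using \<open>\<forall>i<m. u i = 0\<close> v w by (auto simp: u_def mult_Z2pow)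
    then show "v i = w i" by auto
  qed
qed

lemma span_mod_subset:
  assumes "subgroup H G" "g \<in> {..<m} \<rightarrow> H" "K \<subseteq> H"
  shows "span_mod G m g K \<subseteq> H"
  unfolding span_mod_def
  using assms pow_prod_in_subgroup[OF assms(1,2)] subgroup.m_closed[OF assms(1)] by auto

lemma card_span_mod:
  assumes ind: "independent_mod G m g K" and g: "g \<in> {..<m} \<rightarrow> involutions G"
    and K: "subgroup K G" "finite K"
  shows "card (span_mod G m g K) = 2 ^ m * card K"
proof -
  have "inj_on (\<lambda>(v, k). pow_prod G m g v \<otimes> k) (({..<m} \<rightarrow>\<^sub>E {0, 1}) \<times> K)"
  proof (rule inj_onI, clarify)
    fix v k w k'
    assume vw: "v \<in> {..<m} \<rightarrow>\<^sub>E {0, 1}" "w \<in> {..<m} \<rightarrow>\<^sub>E {0, 1}" and k: "k \<in> K" "k' \<in> K"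
      and eq: "pow_prod G m g v \<otimes> k = pow_prod G m g w \<otimes> k'"
    have "v = w" by (rule independent_mod_unique[OF ind g K(1) vw k eq])
    moreover have "pow_prod G m g w \<in> carrier G"
      using g by (intro pow_prod_closed) (auto simp: involutions_def)
    then have "k = k'"
      using eq k \<open>v = w\<close> subgroup.mem_carrier[OF K(1)] by (metis l_cancel)
    ultimately show "v = w \<and> k = k'" ..
  qed
  then have "card (span_mod G m g K) = card (({..<m} \<rightarrow>\<^sub>E {0::int, 1}) \<times> K)"
    unfolding span_mod_def by (rule card_image)
  also have "\<dots> = card (carrier (Z2pow m)) * card K"
    by (simp only: carrier_Z2pow card_cartesian_product)
  finally show ?thesis by (simp only: card_Z2pow)
qed

lemma independent_mod_extend:
  assumes ind: "independent_mod G m g K" and g: "g \<in> {..<m} \<rightarrow> involutions G" and K: "K \<subseteq> carrier G"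
    and h: "h \<in> involutions G" "h \<notin> span_mod G m g K"
  shows "independent_mod G (Suc m) (g(m := h)) K"
  unfolding independent_mod_def
proof (intro ballI impI allI)
  fix v i
  assume v: "v \<in> {..<Suc m} \<rightarrow>\<^sub>E {0, 1}" and inK: "pow_prod G (Suc m) (g(m := h)) v \<in> K"
    and i: "i < Suc m"
  define v' where "v' = restrict v {..<m}"
  have v': "v' \<in> {..<m} \<rightarrow>\<^sub>E {0, 1}" using v by (simp add: v'_def restrict_PiE_iff PiE_iff)
  have gc: "g \<in> {..<m} \<rightarrow> carrier G" "h \<in> carrier G" using g h by (auto simp: involutions_def)
  have p_inv: "pow_prod G m g v' \<in> involutions G"
    using g by (rule pow_prod_in_subgroup[OF subgroup_involutions])
  then have pc: "pow_prod G m g v' \<in> carrier G" by (simp add: involutions_def)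
  have "pow_prod G m (g(m := h)) v = pow_prod G m g v'"
    by (rule pow_prod_cong) (use gc in \<open>auto simp: v'_def\<close>)
  moreover have "g(m := h) \<in> {..<Suc m} \<rightarrow> carrier G" using gc by (auto simp: less_Suc_eq)
  ultimately have split: "pow_prod G (Suc m) (g(m := h)) v = pow_prod G m g v' \<otimes> h [^] v m"
    by (simp add: pow_prod_Suc)
  have "v m = 0"
  proof (rule ccontr)
    assume "v m \<noteq> 0"
    then have "v m = 1" using v by auto
    then have k: "pow_prod G m g v' \<otimes> h \<in> K" using inK split gc by simp
    have h_eq: "h = pow_prod G m g v' \<otimes> (pow_prod G m g v' \<otimes> h)"
      using p_inv pc gc by (simp add: involutions_def m_assoc[symmetric])
    have "h \<in> span_mod G m g K"
      using span_modI[OF v' k, of G g] h_eq by simp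
    then show False using h(2) by contradiction
  qed
  then have "pow_prod G m g v' \<in> K" using inK split pc by simp
  then have "\<forall>j<m. v' j = 0" using ind v' unfolding independent_mod_def by blast
  then show "v i = 0" using i \<open>v m = 0\<close> by (cases "i = m") (auto simp: v'_def)
qed

lemma exists_independent_spanning:
  assumes fin: "finite (carrier G)" and K: "subgroup K G" "K \<subseteq> involutions G"
  shows "\<exists>m g. g \<in> {..<m} \<rightarrow> involutions G \<and> independent_mod G m g K \<and>
           span_mod G m g K = involutions G"
proof -
  define M where "M = {m. \<exists>g. g \<in> {..<m} \<rightarrow> involutions G \<and> independent_mod G m g K}"
  have fin_inv: "finite (involutions G)" using fin by (simp add: involutions_def)
  have finK: "finite K" using K(2) fin_inv by (rule finite_subset)
  have "card K > 0" using finK subgroup.one_closed[OF K(1)] card_gt_0_iff by blast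
  have "M \<subseteq> {..<card (involutions G)}"
  proof
    fix m assume "m \<in> M"
    then obtain g where g: "g \<in> {..<m} \<rightarrow> involutions G" "independent_mod G m g K"
      unfolding M_def by blast
    have "m < 2 ^ m" by (rule less_exp)
    also have "\<dots> \<le> 2 ^ m * card K" using \<open>card K > 0\<close> by simp
    also have "\<dots> = card (span_mod G m g K)" using card_span_mod[OF g(2,1) K(1) finK] by simp
    also have "\<dots> \<le> card (involutions G)"
      using card_mono[OF fin_inv span_mod_subset[OF subgroup_involutions g(1) K(2)]] .
    finally show "m \<in> {..<card (involutions G)}" by simp
  qed
  then have finM: "finite M" by (rule finite_subset) simp
  have "0 \<in> M" by (simp add: M_def independent_mod_def)
  then have "Max M \<in> M" using finM Max_in by blast
  then obtain g where g: "g \<in> {..<Max M} \<rightarrow> involutions G" "independent_mod G (Max M) g K"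
    unfolding M_def by blast
  have "span_mod G (Max M) g K = involutions G"
  proof (rule ccontr)
    assume "span_mod G (Max M) g K \<noteq> involutions G"
    then obtain h where h: "h \<in> involutions G" "h \<notin> span_mod G (Max M) g K"
      using span_mod_subset[OF subgroup_involutions g(1) K(2)] by blast
    have "independent_mod G (Suc (Max M)) (g(Max M := h)) K"
      using independent_mod_extend[OF g(2,1) _ h] K subgroup.subset by blast
    moreover have "g(Max M := h) \<in> {..<Suc (Max M)} \<rightarrow> involutions G"
      using g(1) h(1) by (auto simp: less_Suc_eq)
    ultimately have "Suc (Max M) \<in> M" unfolding M_def by blast
    then have "Suc (Max M) \<le> Max M" using finM by (rule Max_ge[rotated])
    then show False by simp
  qed
  then show ?thesis using g by blast
qed

end

section \<open>Groups whose involutions have index at most two\<close>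

lemma (in group) index_two_mult_inv_mem:
  assumes H: "subgroup H G" and two: "card (rcosets H) = 2"
    and x: "x \<in> carrier G - H" and y: "y \<in> carrier G - H"
  shows "x \<otimes> inv y \<in> H"
proof -
  have cosets: "H \<in> rcosets H" "H #> x \<in> rcosets H" "H #> y \<in> rcosets H"
    using subgroup.subgroup_in_rcosets[OF H is_group] x y subgroup.subset[OF H]
    by (auto intro: rcosetsI)
  have ne: "H #> x \<noteq> H" "H #> y \<noteq> H" using rcos_self[OF _ H] x y by auto
  have "H #> x = H #> y"
  proof (rule ccontr)
    assume "H #> x \<noteq> H #> y"
    then have "card {H, H #> x, H #> y} = 3" using ne by simp
    moreover have "card {H, H #> x, H #> y} \<le> card (rcosets H)"
      using cosets two by (intro card_mono) (simp_all add: card_ge_0_finite)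
    ultimately show False using two by simp
  qed
  then have "x \<in> H #> y" using rcos_self[OF _ H] x by auto
  then show ?thesis using subgroup.rcos_module_imp[OF H is_group] y by blast
qed

lemma (in group) index_two_square_mem:
  assumes H: "subgroup H G" and two: "card (rcosets H) = 2" and x: "x \<in> carrier G"
  shows "x \<otimes> x \<in> H"
proof (cases "x \<in> H")
  case True
  then show ?thesis using H by (simp add: subgroup.m_closed)
next
  case False
  then have "inv x \<notin> H" using H x by (metis inv_inv subgroup.m_inv_closed)
  then show ?thesis
    using index_two_mult_inv_mem[OF H two, of x "inv x"] x False by simp
qed

lemma (in group) subgroup_one_involution:
  assumes "t \<in> involutions G"
  shows "subgroup {\<one>, t} G"
  using assms by (intro subgroupI) (auto simp: involutions_def inv_equality)

context comm_group
begin

lemma elementary_iso_Z2pow: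
  assumes fin: "finite (carrier G)" and elem: "involutions G = carrier G"
  shows "\<exists>m. G \<cong> Z2pow m"
proof -
  have "{\<one>} \<subseteq> involutions G" by (simp add: involutions_def)
  then obtain m g where g: "g \<in> {..<m} \<rightarrow> involutions G" "independent_mod G m g {\<one>}"
    and span: "span_mod G m g {\<one>} = carrier G"
    using exists_independent_spanning[OF fin triv_subgroup] elem by metis
  have "carrier G \<subseteq> pow_prod G m g ` carrier (Z2pow m)"
  proof
    fix y assume "y \<in> carrier G"
    then obtain v where v: "v \<in> {..<m} \<rightarrow>\<^sub>E {0, 1}" and y: "y = pow_prod G m g v \<otimes> \<one>"
      using span by (metis span_modE singletonD)
    have "pow_prod G m g v \<in> carrier G"
      using g(1) by (intro pow_prod_closed) (auto simp: involutions_def)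
    then show "y \<in> pow_prod G m g ` carrier (Z2pow m)"
      using v y by (simp add: carrier_Z2pow)
  qed
  moreover have "card (carrier (Z2pow m)) = order G"
    using card_span_mod[OF g(2,1) triv_subgroup] span by (simp add: card_Z2pow order_def)
  ultimately show ?thesis
    using iso_of_surj_hom_card_eq[OF group_Z2pow pow_prod_hom[OF g(1)] _ fin] by blast
qed

lemma pow_prod_pow_surj:
  assumes two: "card (rcosets (involutions G)) = 2" and x: "x \<in> carrier G - involutions G"
    and g: "g \<in> {..<m} \<rightarrow> involutions G" and span: "span_mod G m g {\<one>, x \<otimes> x} = involutions G"
  shows "carrier G \<subseteq> (\<lambda>(v, a). pow_prod G m g v \<otimes> x [^] a) ` carrier (Z2pow_Z4 m)"
proof
  let ?f = "\<lambda>(v, a). pow_prod G m g v \<otimes> x [^] a"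
  have xc: "x \<in> carrier G" using x by simp
  have even: "\<exists>v \<in> carrier (Z2pow m). \<exists>e \<in> {0::int, 2}. h = pow_prod G m g v \<otimes> x [^] e"
    if "h \<in> involutions G" for h
  proof -
    from that span have "h \<in> span_mod G m g {\<one>, x \<otimes> x}" by simp
    then obtain v k where v: "v \<in> {..<m} \<rightarrow>\<^sub>E {0, 1}" and k: "k \<in> {\<one>, x \<otimes> x}"
      and h: "h = pow_prod G m g v \<otimes> k"
      by (rule span_modE)
    have "k = x [^] (0::int) \<or> k = x [^] (2::int)" using k xc by (auto simp: int_pow_two)
    then obtain e :: int where e: "e \<in> {0, 2}" "k = x [^] e" by blast
    show ?thesis using v e h by (intro bexI[of _ v] bexI[of _ e]) (simp_all add: carrier_Z2pow)
  qed
  fix y assume y: "y \<in> carrier G"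
  have pc: "pow_prod G m g v \<in> carrier G" for v
    using g by (intro pow_prod_closed) (auto simp: involutions_def)
  show "y \<in> ?f ` carrier (Z2pow_Z4 m)"
  proof (cases "y \<in> involutions G")
    case True
    then obtain v and e :: int where "v \<in> carrier (Z2pow m)" "e \<in> {0, 2}" "y = pow_prod G m g v \<otimes> x [^] e"
      using even by blast
    then show ?thesis by (intro rev_image_eqI[of "(v, e)"]) (auto simp: carrier_Z2pow_Z4)
  next
    case False
    then have "y \<otimes> inv x \<in> involutions G"
      using index_two_mult_inv_mem[OF subgroup_involutions two] y x by blast
    then obtain v and e :: int where v: "v \<in> carrier (Z2pow m)" "e \<in> {0, 2}"
      and e: "y \<otimes> inv x = pow_prod G m g v \<otimes> x [^] e"
      using even by blast
    have "y = (y \<otimes> inv x) \<otimes> x" using y xc by (simp add: m_assoc)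
    also have "\<dots> = pow_prod G m g v \<otimes> x [^] (e + 1)"
      unfolding e using pc xc by (simp add: int_pow_mult m_assoc)
    finally show ?thesis using v by (intro rev_image_eqI[of "(v, e + 1)"]) (auto simp: carrier_Z2pow_Z4)
  qed
qed

lemma index_two_iso_Z2pow_Z4:
  assumes fin: "finite (carrier G)" and two: "card (rcosets (involutions G)) = 2"
  shows "\<exists>m. G \<cong> Z2pow_Z4 m"
proof -
  have order: "order G = 2 * card (involutions G)"
    using lagrange[OF subgroup_involutions] two by simp
  have fin_inv: "finite (involutions G)" using fin by (simp add: involutions_def)
  have "\<one> \<in> involutions G" by (simp add: involutions_def)
  then have "card (involutions G) > 0" using fin_inv card_gt_0_iff by blast
  then have "card (involutions G) < card (carrier G)" using order by (simp add: order_def)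
  then have "\<not> carrier G \<subseteq> involutions G" using card_mono[OF fin_inv] by (meson leD)
  then obtain x where x: "x \<in> carrier G - involutions G" by blast
  have "x \<otimes> x \<in> involutions G"
    using index_two_square_mem[OF subgroup_involutions two] x by blast
  moreover have "x \<otimes> x \<noteq> \<one>" using x by (simp add: involutions_def)
  ultimately have K: "subgroup {\<one>, x \<otimes> x} G" "{\<one>, x \<otimes> x} \<subseteq> involutions G" "card {\<one>, x \<otimes> x} = 2"
    using subgroup_one_involution by (auto simp: involutions_def)
  obtain m g where g: "g \<in> {..<m} \<rightarrow> involutions G" "independent_mod G m g {\<one>, x \<otimes> x}"
    and span: "span_mod G m g {\<one>, x \<otimes> x} = involutions G"
    using exists_independent_spanning[OF fin K(1,2)] by blast
  have x4: "x [^] (4::int) = \<one>"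
    using int_pow_mult[of x 2 2] \<open>x \<otimes> x \<in> involutions G\<close> x by (simp add: int_pow_two involutions_def)
  have "card (carrier (Z2pow_Z4 m)) = order G"
    using card_span_mod[OF g(2,1) K(1)] span order K(3) by (simp add: card_Z2pow_Z4)
  then show ?thesis
    using iso_of_surj_hom_card_eq[OF group_Z2pow_Z4 pow_prod_pow_hom[OF g(1) _ x4]
        pow_prod_pow_surj[OF two x g(1) span] fin] x by blast
qed

end

section \<open>Counting zero-sum triples\<close>

lemma exists_maximal_disjoint_family:
  assumes "finite A"
  shows "\<exists>T. (\<forall>t\<in>T. t \<subseteq> A \<and> P t) \<and> pairwise disjnt T \<and>
             (\<forall>t. t \<subseteq> A \<and> P t \<and> t \<noteq> {} \<longrightarrow> \<not> disjnt t (\<Union>T))"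
proof -
  define F where "F = {T. (\<forall>t\<in>T. t \<subseteq> A \<and> P t) \<and> pairwise disjnt T}"
  have "F \<subseteq> Pow (Pow A)" by (auto simp: F_def)
  then have finF: "finite F" using assms by (simp add: finite_subset)
  have "{} \<in> F" by (simp add: F_def)
  then have "Max (card ` F) \<in> card ` F" using finF by (intro Max_in) auto
  then obtain T where card_T: "Max (card ` F) = card T" and T: "T \<in> F" by (rule imageE)
  have max: "card T' \<le> card T" if "T' \<in> F" for T' using that finF by (simp flip: card_T)
  have finT: "finite T" using T assms by (auto simp: F_def intro: finite_subset[of T "Pow A"])
  have "\<not> disjnt t (\<Union>T)" if t: "t \<subseteq> A" "P t" "t \<noteq> {}" for t
  proof
    assume disj: "disjnt t (\<Union>T)"
    then have "t \<notin> T" using t(3) by (auto simp: disjnt_def)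
    moreover have "insert t T \<in> F"
      using T t disj by (auto simp: F_def pairwise_insert disjnt_def)
    ultimately have "card T + 1 \<le> card T" using max[of "insert t T"] finT by simp
    then show False by simp
  qed
  then show ?thesis using T unfolding F_def by blast
qed

text \<open>For \<open>h \<le> n/3\<close> one has \<open>(n - h)(n - 2h) \<ge> 2n\<^sup>2/9\<close>, while \<open>3n + 3un < 12n\<^sup>2/100\<close>.\<close>

lemma triple_counting_arith:
  fixes n h u :: nat
  assumes n: "100 \<le> n" and h: "3 * h \<le> n" and u: "100 * u < 3 * n"
  shows "3 * n + 3 * u * n < (n - h) * (n - 2 * h)"
proof -
  have "100 * (3 * n) \<le> 3 * (n * n)" using n by simp
  moreover have "100 * (3 * u * n) < 3 * (3 * (n * n))"
    using u n by (simp add: algebra_simps)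
  moreover have "2 * (n * n) \<le> 9 * ((n - h) * (n - 2 * h))"
  proof -
    have "(2 * n) * n \<le> (3 * (n - h)) * (3 * (n - 2 * h))"
      using h by (intro mult_le_mono[of "2 * n" _ n]) linarith+
    then show ?thesis by (simp add: algebra_simps)
  qed
  ultimately show ?thesis by linarith
qed

context group
begin

lemma card_pairs_outside_ge:
  assumes fin: "finite (carrier G)" and H: "H \<subseteq> carrier G"
  shows "(order G - card H) * (order G - 2 * card H)
           \<le> card {(x, y) \<in> carrier G \<times> carrier G. x \<notin> H \<and> y \<notin> H \<and> x \<otimes> y \<notin> H}"
proof -
  let ?N = "carrier G - H"
  have finH: "finite H" using fin H by (rule finite_subset[rotated])
  have row: "order G - 2 * card H \<le> card {y \<in> ?N. x \<otimes> y \<notin> H}" if x: "x \<in> carrier G" for x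
  proof -
    let ?X = "H \<union> (\<lambda>h. inv x \<otimes> h) ` H"
    have "carrier G - ?X \<subseteq> {y \<in> ?N. x \<otimes> y \<notin> H}"
    proof
      fix y assume y: "y \<in> carrier G - ?X"
      have "x \<otimes> y \<notin> H"
      proof
        assume "x \<otimes> y \<in> H"
        moreover have "y = inv x \<otimes> (x \<otimes> y)" using x y by (simp add: m_assoc[symmetric])
        ultimately show False using y by blast
      qed
      then show "y \<in> {y \<in> ?N. x \<otimes> y \<notin> H}" using y by blast
    qed
    then have "card (carrier G - ?X) \<le> card {y \<in> ?N. x \<otimes> y \<notin> H}"
      using fin by (intro card_mono) auto
    moreover have "card ?X \<le> 2 * card H"
      using card_Un_le[of H "(\<lambda>h. inv x \<otimes> h) ` H"] card_image_le[OF finH, of "\<lambda>h. inv x \<otimes> h"]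
      by linarith
    moreover have "order G - card ?X \<le> card (carrier G - ?X)"
      unfolding order_def using finH by (intro diff_card_le_card_Diff) simp
    ultimately show ?thesis by linarith
  qed
  have "card ?N = order G - card H"
    unfolding order_def using finH H by (rule card_Diff_subset)
  then have "(order G - card H) * (order G - 2 * card H) \<le> (\<Sum>x\<in>?N. card {y \<in> ?N. x \<otimes> y \<notin> H})"
    using sum_bounded_below[of ?N "order G - 2 * card H"] row by simp
  also have "\<dots> = card (SIGMA x:?N. {y \<in> ?N. x \<otimes> y \<notin> H})"
    using fin by simp
  also have "(SIGMA x:?N. {y \<in> ?N. x \<otimes> y \<notin> H})
      = {(x, y) \<in> carrier G \<times> carrier G. x \<notin> H \<and> y \<notin> H \<and> x \<otimes> y \<notin> H}"
    by auto
  finally show ?thesis .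
qed

text \<open>Each of the six conditions determines one coordinate of the pair from the other one,
  possibly together with an element of \<^term>\<open>U\<close>.\<close>

lemma card_pairs_degenerate_or_meeting_le:
  assumes fin: "finite (carrier G)" and U: "U \<subseteq> carrier G"
  shows "card {(x, y) \<in> carrier G \<times> carrier G. x = y \<or> x = inv (x \<otimes> y) \<or> y = inv (x \<otimes> y) \<or>
                  x \<in> U \<or> y \<in> U \<or> inv (x \<otimes> y) \<in> U}
           \<le> 3 * order G + 3 * card U * order G"
proof -
  let ?C = "carrier G"
  define D1 where "D1 = (\<lambda>x. (x, x)) ` ?C"
  define D2 where "D2 = (\<lambda>x. (x, inv (x \<otimes> x))) ` ?C"
  define D3 where "D3 = (\<lambda>y. (inv (y \<otimes> y), y)) ` ?C"
  define M where "M = (\<lambda>(x, w). (x, inv x \<otimes> inv w)) ` (?C \<times> U)"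
  define B where "B = D1 \<union> D2 \<union> D3 \<union> U \<times> ?C \<union> ?C \<times> U \<union> M"
  have finU: "finite U" using fin U by (rule finite_subset[rotated])
  have "{(x, y) \<in> ?C \<times> ?C. x = y \<or> x = inv (x \<otimes> y) \<or> y = inv (x \<otimes> y) \<or>
                  x \<in> U \<or> y \<in> U \<or> inv (x \<otimes> y) \<in> U} \<subseteq> B"
  proof clarify
    fix x y assume x: "x \<in> ?C" and y: "y \<in> ?C"
      and bad: "x = y \<or> x = inv (x \<otimes> y) \<or> y = inv (x \<otimes> y) \<or> x \<in> U \<or> y \<in> U \<or> inv (x \<otimes> y) \<in> U"
    from bad show "(x, y) \<in> B"
    proof (elim disjE)
      assume "x = inv (x \<otimes> y)"
      then have "y = inv (x \<otimes> x)" using x y by (metis inv_equality inv_inv m_assoc m_closed r_inv)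
      then show ?thesis using x by (auto simp: B_def D1_def D2_def D3_def)
    next
      assume "y = inv (x \<otimes> y)"
      then have "x = inv (y \<otimes> y)" using x y by (metis inv_equality inv_inv m_assoc m_closed l_inv)
      then show ?thesis using y by (auto simp: B_def D1_def D2_def D3_def)
    next
      assume "inv (x \<otimes> y) \<in> U"
      moreover have "y = inv x \<otimes> inv (inv (x \<otimes> y))" using x y by (simp add: m_assoc[symmetric])
      ultimately have "(x, y) \<in> M"
        unfolding M_def using x by (intro rev_image_eqI[of "(x, inv (x \<otimes> y))"]) simp_all
      then show ?thesis by (simp add: B_def)
    qed (use x y in \<open>auto simp: B_def D1_def\<close>)
  qed
  then have "card {(x, y) \<in> ?C \<times> ?C. x = y \<or> x = inv (x \<otimes> y) \<or> y = inv (x \<otimes> y) \<or>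
                  x \<in> U \<or> y \<in> U \<or> inv (x \<otimes> y) \<in> U} \<le> card B"
    using fin finU by (intro card_mono) (simp_all add: B_def D1_def D2_def D3_def M_def)
  also have "\<dots> \<le> card D1 + card D2 + card D3 + card (U \<times> ?C) + card (?C \<times> U) + card M"
    unfolding B_def
    using card_Un_le[of "D1 \<union> D2 \<union> D3 \<union> U \<times> ?C \<union> ?C \<times> U" M]
      card_Un_le[of "D1 \<union> D2 \<union> D3 \<union> U \<times> ?C" "?C \<times> U"]
      card_Un_le[of "D1 \<union> D2 \<union> D3" "U \<times> ?C"] card_Un_le[of "D1 \<union> D2" D3] card_Un_le[of D1 D2]
    by linarith
  also have "\<dots> \<le> 3 * order G + 3 * card U * order G"
  proof -
    have "card D1 \<le> order G" "card D2 \<le> order G" "card D3 \<le> order G"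
      unfolding D1_def D2_def D3_def order_def using fin by (simp_all add: card_image_le)
    moreover have "card M \<le> card U * order G"
      unfolding M_def using card_image_le[of "?C \<times> U"] fin finU
      by (simp add: card_cartesian_product order_def mult.commute)
    ultimately show ?thesis by (simp add: card_cartesian_product order_def)
  qed
  finally show ?thesis .
qed

end

definition zero_sum_triple :: "('a, 'b) monoid_scheme \<Rightarrow> 'a set \<Rightarrow> bool" where
  "zero_sum_triple G t \<longleftrightarrow> (\<exists>x y z. t = {x, y, z} \<and> x \<noteq> y \<and> x \<noteq> z \<and> y \<noteq> z \<and>
     non_involution G x \<and> non_involution G y \<and> non_involution G z \<and> x \<otimes>\<^bsub>G\<^esub> y \<otimes>\<^bsub>G\<^esub> z = \<one>\<^bsub>G\<^esub>)"

lemma zero_sum_triple_card: "zero_sum_triple G t \<Longrightarrow> card t = 3"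
  by (auto simp: zero_sum_triple_def)

lemma zero_sum_triple_subset: "zero_sum_triple G t \<Longrightarrow> t \<subseteq> carrier G"
  by (auto simp: zero_sum_triple_def non_involution_def)

context group
begin

lemma exists_zero_sum_triple_avoiding:
  assumes fin: "finite (carrier G)" and big: "100 \<le> order G"
    and few_inv: "3 * card (involutions G) \<le> order G"
    and U: "U \<subseteq> carrier G" "100 * card U < 3 * order G"
  shows "\<exists>t. zero_sum_triple G t \<and> disjnt t U"
proof -
  let ?H = "involutions G"
  let ?good = "{(x, y) \<in> carrier G \<times> carrier G. x \<notin> ?H \<and> y \<notin> ?H \<and> x \<otimes> y \<notin> ?H}"
  let ?bad = "{(x, y) \<in> carrier G \<times> carrier G. x = y \<or> x = inv (x \<otimes> y) \<or> y = inv (x \<otimes> y) \<or>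
                  x \<in> U \<or> y \<in> U \<or> inv (x \<otimes> y) \<in> U}"
  have "card ?bad < card ?good"
    using card_pairs_degenerate_or_meeting_le[OF fin U(1)] card_pairs_outside_ge[OF fin, of ?H]
      triple_counting_arith[OF big few_inv U(2)]
    by (simp add: involutions_def)
  moreover have "finite ?bad" using fin by (auto intro: finite_subset[of _ "carrier G \<times> carrier G"])
  ultimately have "\<not> ?good \<subseteq> ?bad" using card_mono by (meson leD)
  then obtain x y where x: "x \<in> carrier G" "x \<notin> ?H" and y: "y \<in> carrier G" "y \<notin> ?H"
    and xy: "x \<otimes> y \<notin> ?H" and not_bad: "(x, y) \<notin> ?bad"
    by auto
  let ?z = "inv (x \<otimes> y)"
  have "?z \<otimes> ?z \<noteq> \<one>"
    using xy x y by (simp add: involutions_def flip: inv_mult_group)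
  then have "zero_sum_triple G {x, y, ?z}"
    unfolding zero_sum_triple_def non_involution_def
    using x y xy not_bad by (intro exI[of _ x] exI[of _ y] exI[of _ ?z]) (auto simp: involutions_def)
  moreover have "disjnt {x, y, ?z} U" using x y not_bad by (auto simp: disjnt_def)
  ultimately show ?thesis by blast
qed

lemma many_disjoint_zero_sum_triples:
  assumes fin: "finite (carrier G)" and big: "100 \<le> order G"
    and few_inv: "3 * card (involutions G) \<le> order G"
  shows "\<exists>T. order G \<le> 100 * card T \<and> pairwise disjnt T \<and> (\<forall>t\<in>T. zero_sum_triple G t)"
proof -
  obtain T where T: "\<forall>t\<in>T. t \<subseteq> carrier G \<and> zero_sum_triple G t" "pairwise disjnt T"
    and maximal: "\<forall>t. t \<subseteq> carrier G \<and> zero_sum_triple G t \<and> t \<noteq> {} \<longrightarrow> \<not> disjnt t (\<Union>T)"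
    using exists_maximal_disjoint_family[OF fin, of "zero_sum_triple G"] by blast
  have "order G \<le> 100 * card T"
  proof (rule ccontr)
    assume "\<not> order G \<le> 100 * card T"
    moreover have "card (\<Union>T) \<le> card T * 3"
    proof -
      have "sum card T \<le> card T * 3"
        by (rule sum_bounded_above[of T card 3, simplified]) (use T(1) zero_sum_triple_card in force)
      then show ?thesis using card_Union_le_sum_card[of T] by linarith
    qed
    ultimately have "100 * card (\<Union>T) < 3 * order G" by linarith
    moreover have "\<Union>T \<subseteq> carrier G" using T(1) by blast
    ultimately obtain t where "zero_sum_triple G t" "disjnt t (\<Union>T)"
      using exists_zero_sum_triple_avoiding[OF fin big few_inv] by blast
    moreover from this have "t \<subseteq> carrier G" "t \<noteq> {}"
      using zero_sum_triple_subset zero_sum_triple_card by force+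
    ultimately show False using maximal by blast
  qed
  then show ?thesis using T by blast
qed

end

context comm_group
begin

lemma card_involutions_le_third:
  assumes fin: "finite (carrier G)"
    and not_elem: "\<forall>m. \<not> G \<cong> Z2pow m" and not_Z4: "\<forall>m. \<not> G \<cong> Z2pow_Z4 m"
  shows "3 * card (involutions G) \<le> order G"
proof -
  define q where "q = card (rcosets (involutions G))"
  have lag: "q * card (involutions G) = order G"
    unfolding q_def by (rule lagrange[OF subgroup_involutions])
  have "order G > 0" using fin by (simp add: order_gt_0_iff_finite)
  then have "q \<noteq> 0" using lag by (metis mult_0 less_irrefl)
  moreover have "q \<noteq> 1"
  proof
    assume "q = 1"
    then have "involutions G = carrier G"
      using lag fin by (intro card_subset_eq) (auto simp: involutions_def order_def)
    then show False using elementary_iso_Z2pow[OF fin] not_elem by blast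
  qed
  moreover have "q \<noteq> 2" using index_two_iso_Z2pow_Z4[OF fin] not_Z4 unfolding q_def by blast
  ultimately have "3 * card (involutions G) \<le> q * card (involutions G)" by simp
  then show ?thesis using lag by simp
qed

end

theorem lemma6p32:
  shows "\<exists>n0::nat. \<forall>G :: nat monoid.
    comm_group G \<and> finite (carrier G) \<and> order G \<ge> n0 \<and>
    (\<forall>m. \<not> G \<cong> Z2pow m) \<and> (\<forall>m. \<not> G \<cong> Z2pow_Z4 m) \<longrightarrow>
    (\<exists>T :: nat set set.
       real (card T) \<ge> real (order G) / 100 \<and>
       (\<forall>t\<in>T. \<forall>t'\<in>T. t \<noteq> t' \<longrightarrow> t \<inter> t' = {}) \<and>
       (\<forall>t\<in>T. \<exists>x y z. t = {x, y, z} \<and> x \<noteq> y \<and> x \<noteq> z \<and> y \<noteq> z \<and>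
          non_involution G x \<and> non_involution G y \<and> non_involution G z \<and>
          x \<otimes>\<^bsub>G\<^esub> y \<otimes>\<^bsub>G\<^esub> z = \<one>\<^bsub>G\<^esub>))"
proof (intro exI[of _ 100] allI impI, elim conjE)
  fix G :: "nat monoid"
  assume "comm_group G" and fin: "finite (carrier G)" and big: "100 \<le> order G"
    and not_elem: "\<forall>m. \<not> G \<cong> Z2pow m" and not_Z4: "\<forall>m. \<not> G \<cong> Z2pow_Z4 m"
  interpret comm_group G by fact
  obtain T where "order G \<le> 100 * card T" "pairwise disjnt T" "\<forall>t\<in>T. zero_sum_triple G t"
    using many_disjoint_zero_sum_triples[OF fin big card_involutions_le_third[OF fin not_elem not_Z4]]
    by blast
  then show "\<exists>T :: nat set set.
       real (card T) \<ge> real (order G) / 100 \<and>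
       (\<forall>t\<in>T. \<forall>t'\<in>T. t \<noteq> t' \<longrightarrow> t \<inter> t' = {}) \<and>
       (\<forall>t\<in>T. \<exists>x y z. t = {x, y, z} \<and> x \<noteq> y \<and> x \<noteq> z \<and> y \<noteq> z \<and>
          non_involution G x \<and> non_involution G y \<and> non_involution G z \<and>
          x \<otimes>\<^bsub>G\<^esub> y \<otimes>\<^bsub>G\<^esub> z = \<one>\<^bsub>G\<^esub>)"
    unfolding zero_sum_triple_def pairwise_def disjnt_def by (intro exI[of _ T]) auto
qed

end
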